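(* Let $\alpha\ge1$ be an integer and $0<\eta_1<\dots<\eta_\alpha<1$. Let $r_y$ be the rank function on $[-D,D]$ with thresholds $q_j=\eta_jD$ ($j=1,\dots,\alpha$), and let $r_z$ be the rank function on $[-2V,2V]$ with thresholds $q_j=\eta_j\xi V$ ($j=1,\dots,\alpha$) and $q_{\alpha+1}=\xi V$ (so $z$ has $\beta=\alpha+1$ thresholds). For $\mathbf{x}_1,\mathbf{x}_2\in S$ let $y=f(\mathbf{x}_1)-f(\mathbf{x}_2)$, $z=\theta(\mathbf{x}_1)-\theta(\mathbf{x}_2)$, $\varphi=r_y(y)+r_z(z)$, and $e=\xi V/D$. Then for all $\mathbf{x}_1,\mathbf{x}_2\in S$: (i) if $\varphi<0$ then $\pi(\mathbf{x}_1)>\pi(\mathbf{x}_2)$; (ii) if $\varphi>0$ then $\pi(\mathbf{x}_1)<\pi(\mathbf{x}_2)$; (iii) if $\varphi=0$ and $z=-ey$ then $\pi(\mathbf{x}_1)=\pi(\mathbf{x}_2)$; (iv) if $\varphi=0$ and $z<-ey$ then $\pi(\mathbf{x}_1)>\pi(\mathbf{x}_2)$; (v) if $\varphi=0$ and $z>-ey$ then $\pi(\mathbf{x}_1)<\pi(\mathbf{x}_2)$.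
   Context: Let $S\subset\mathbb{R}^k$ be a compact box, $f,g_1,\dots,g_m,h_{m+1},\dots,h_n:S\to\mathbb{R}$ continuous, $\delta>0$. Put $v_i(\mathbf{x})=\max\{g_i(\mathbf{x}),0\}$ ($i\le m$), $v_i(\mathbf{x})=\max\{|h_i(\mathbf{x})|-\delta,0\}$ ($m<i\le n$), $\vartheta(\mathbf{x})=\sum_{i=1}^n v_i(\mathbf{x})$; $\mathbf{x}$ is feasible iff $\vartheta(\mathbf{x})=0$. Let $D=\max_S f-\min_S f$ and $V=\max_S\vartheta$, and assume $D>0$, $V>0$. Define $\theta(\mathbf{x})=-V$ if $\vartheta(\mathbf{x})=0$ and $\theta(\mathbf{x})=\vartheta(\mathbf{x})$ otherwise. Let $\rho(\mathbf{x})=\#\{i: v_i(\mathbf{x})>0\}$ and $\mathbb{I}(\rho(\mathbf{x})>0)$ be $1$ if $\rho(\mathbf{x})>0$ and $0$ otherwise. Fix $0<\xi\le 1$ and define $\sigma(\mathbf{x})=\mathbb{I}(\rho(\mathbf{x})>0)\,D+\frac{D}{\xi V}\theta(\mathbf{x})$, $\pi(\mathbf{x})=-(f(\mathbf{x})+\sigma(\mathbf{x}))$. Rank function: given $b>0$ and thresholds $0<q_1<\dots<q_a<b$, set $q_0=0$, $q_{a+1}=b$ and define $r:[-b,b]\to\mathbb{Z}$ by $r(0)=0$; $r(\Delta)=j$ if $q_{j-1}<\Delta\le q_j$ ($1\le j\le a+1$); $r(\Delta)=-j$ if $-q_j\le\Delta<-q_{j-1}$ ($1\le j\le a+1$). 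*)

theory Defs
  imports "HOL-Analysis.Analysis"
begin

text \<open>Constraint violations: indices 1..m are inequality constraints g i \<le> 0,
  indices m+1..n are equality constraints |h i| \<le> delta.\<close>
definition viol :: "nat \<Rightarrow> (nat \<Rightarrow> 'a \<Rightarrow> real) \<Rightarrow> (nat \<Rightarrow> 'a \<Rightarrow> real) \<Rightarrow> real \<Rightarrow> nat \<Rightarrow> 'a \<Rightarrow> real" where
  "viol m g h \<delta> i x = (if i \<le> m then max (g i x) 0 else max (\<bar>h i x\<bar> - \<delta>) 0)"

definition vtheta :: "nat \<Rightarrow> nat \<Rightarrow> (nat \<Rightarrow> 'a \<Rightarrow> real) \<Rightarrow> (nat \<Rightarrow> 'a \<Rightarrow> real) \<Rightarrow> real \<Rightarrow> 'a \<Rightarrow> real" where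
  "vtheta m n g h \<delta> x = (\<Sum>i\<in>{1..n}. viol m g h \<delta> i x)"

definition nviol :: "nat \<Rightarrow> nat \<Rightarrow> (nat \<Rightarrow> 'a \<Rightarrow> real) \<Rightarrow> (nat \<Rightarrow> 'a \<Rightarrow> real) \<Rightarrow> real \<Rightarrow> 'a \<Rightarrow> nat" where
  "nviol m n g h \<delta> x = card {i \<in> {1..n}. viol m g h \<delta> i x > 0}"

definition theta :: "real \<Rightarrow> nat \<Rightarrow> nat \<Rightarrow> (nat \<Rightarrow> 'a \<Rightarrow> real) \<Rightarrow> (nat \<Rightarrow> 'a \<Rightarrow> real) \<Rightarrow> real \<Rightarrow> 'a \<Rightarrow> real" where
  "theta V m n g h \<delta> x = (if vtheta m n g h \<delta> x = 0 then - V else vtheta m n g h \<delta> x)"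

definition sigma :: "real \<Rightarrow> real \<Rightarrow> real \<Rightarrow> nat \<Rightarrow> nat \<Rightarrow> (nat \<Rightarrow> 'a \<Rightarrow> real) \<Rightarrow> (nat \<Rightarrow> 'a \<Rightarrow> real) \<Rightarrow> real \<Rightarrow> 'a \<Rightarrow> real" where
  "sigma D V \<xi> m n g h \<delta> x =
     (if nviol m n g h \<delta> x > 0 then 1 else 0) * D + D / (\<xi> * V) * theta V m n g h \<delta> x"

definition pif :: "('a \<Rightarrow> real) \<Rightarrow> real \<Rightarrow> real \<Rightarrow> real \<Rightarrow> nat \<Rightarrow> nat \<Rightarrow> (nat \<Rightarrow> 'a \<Rightarrow> real) \<Rightarrow> (nat \<Rightarrow> 'a \<Rightarrow> real) \<Rightarrow> real \<Rightarrow> 'a \<Rightarrow> real" where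
  "pif f D V \<xi> m n g h \<delta> x = - (f x + sigma D V \<xi> m n g h \<delta> x)"

text \<open>Rank function with thresholds q 1 < ... < q a < b; q_0 = 0, q_(a+1) = b.
  Only meaningful on [-b,b].\<close>
definition qext :: "(nat \<Rightarrow> real) \<Rightarrow> nat \<Rightarrow> real \<Rightarrow> nat \<Rightarrow> real" where
  "qext q a b j = (if j = 0 then 0 else if j = a + 1 then b else q j)"

definition rank :: "(nat \<Rightarrow> real) \<Rightarrow> nat \<Rightarrow> real \<Rightarrow> real \<Rightarrow> int" where
  "rank q a b \<Delta> =
     (if \<Delta> = 0 then 0
      else if \<Delta> > 0 then
        int (THE j. 1 \<le> j \<and> j \<le> a + 1 \<and> qext q a b (j - 1) < \<Delta> \<and> \<Delta> \<le> qext q a b j)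
      else
        - int (THE j. 1 \<le> j \<and> j \<le> a + 1 \<and> - qext q a b j \<le> \<Delta> \<and> \<Delta> < - qext q a b (j - 1)))"

end

theory Submission
  imports Defs
begin

text \<open>
  Up to the positive factor \<open>D / (\<xi> V)\<close>, \<open>\<pi>(x\<^sub>2) - \<pi>(x\<^sub>1)\<close> equals
  \<open>e y + z + \<xi> V d\<close>, where \<open>d \<in> {-1, 0, 1}\<close> is the difference of the infeasibility
  indicators. The thresholds of \<open>r\<^sub>z\<close> are those of \<open>r\<^sub>y\<close> scaled by \<open>e\<close>, plus the
  extra threshold \<open>\<xi> V = e D\<close> bounding \<open>|e y|\<close>; hence \<open>r\<^sub>y(y) = r\<^sub>z(e y)\<close> and, by
  oddness, \<open>\<phi> = r\<^sub>z(z) - r\<^sub>z(-e y)\<close>. If \<open>d = 0\<close>, monotonicity of \<open>r\<^sub>z\<close> makes the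
  sign of \<open>\<phi>\<close> agree with that of \<open>z + e y\<close> whenever \<open>\<phi> \<noteq> 0\<close>. If \<open>d \<noteq> 0\<close>, then
  \<open>|z| > V \<ge> \<xi> V\<close> exceeds every threshold of \<open>r\<^sub>z\<close>, so \<open>|r\<^sub>z(z)| = \<alpha> + 2\<close> beats
  \<open>|r\<^sub>y(y)| \<le> \<alpha> + 1\<close> and \<open>\<phi>\<close> has the sign of \<open>z\<close>, which is also that of \<open>e y + z + \<xi> V d\<close>.
\<close>

lemma strict_mono_on_atMostI:
  fixes f :: "nat \<Rightarrow> 'a::order"
  assumes "\<And>j. j < n \<Longrightarrow> f j < f (Suc j)"
  shows "strict_mono_on {..n} f"
proof (rule strict_mono_onI)
  fix r s assume "r \<in> {..n}" "s \<in> {..n}" "r < s"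
  then show "f r < f s"
  proof (induction s)
    case (Suc s)
    then have "f s < f (Suc s)" using assms by simp
    with Suc show ?case by (cases "r = s") auto
  qed simp
qed

lemma strict_mono_on_qext:
  assumes "1 \<le> a" "0 < q 1" "\<forall>j\<in>{1..<a}. q j < q (j + 1)" "q a < b"
  shows "strict_mono_on {..a+1} (qext q a b)"
  by (rule strict_mono_on_atMostI) (use assms in \<open>auto simp: qext_def less_Suc_eq\<close>)

lemma The_bracketing_index_eq_card:
  fixes Q :: "nat \<Rightarrow> real"
  assumes mono: "strict_mono_on {..a+1} Q" and "Q 0 < t" "t \<le> Q (a+1)"
  shows "(THE j. 1 \<le> j \<and> j \<le> a+1 \<and> Q (j-1) < t \<and> t \<le> Q j) = card {i\<in>{..a}. Q i < t}"
proof -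
  have below_eq: "{i\<in>{..a}. Q i < t} = {..<j}"
    if "1 \<le> j" "j \<le> a+1" "Q (j-1) < t" "t \<le> Q j" for j
  proof (intro set_eqI iffI)
    fix i assume i: "i \<in> {i\<in>{..a}. Q i < t}"
    show "i \<in> {..<j}"
    proof (rule ccontr)
      assume "i \<notin> {..<j}"
      then have "Q j \<le> Q i" using strict_mono_on_leD[OF mono, of j i] i that by auto
      then show False using i that by auto
    qed
  next
    fix i assume "i \<in> {..<j}"
    then have "i \<le> a" "Q i \<le> Q (j-1)"
      using strict_mono_on_leD[OF mono, of i "j-1"] that by auto
    then show "i \<in> {i\<in>{..a}. Q i < t}"
      using that by auto
  qed
  define j where "j = (LEAST j. t \<le> Q j)"
  have "t \<le> Q j" "j \<le> a+1"
    using LeastI[of "\<lambda>j. t \<le> Q j"] Least_le[of "\<lambda>j. t \<le> Q j"] assms(3) unfolding j_def by auto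
  moreover have "j \<noteq> 0" using \<open>t \<le> Q j\<close> assms(2) by (cases j) auto
  moreover have "Q (j-1) < t"
    using not_less_Least[of "j-1" "\<lambda>j. t \<le> Q j"] \<open>j \<noteq> 0\<close> unfolding j_def by simp
  ultimately have j: "1 \<le> j \<and> j \<le> a+1 \<and> Q (j-1) < t \<and> t \<le> Q j" by simp
  then have "(THE j. 1 \<le> j \<and> j \<le> a+1 \<and> Q (j-1) < t \<and> t \<le> Q j) = j"
    by (rule the_equality) (use below_eq j in \<open>metis card_lessThan\<close>)
  also have "\<dots> = card {i\<in>{..a}. Q i < t}" using below_eq[of j] j by simp
  finally show ?thesis .
qed

lemma rank_uminus: "rank q a b (- t) = - rank q a b t"
proof -
  have flip: "(\<lambda>j. 1 \<le> j \<and> j \<le> a + 1 \<and> - qext q a b j \<le> s \<and> s < - qext q a b (j - 1))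
      = (\<lambda>j. 1 \<le> j \<and> j \<le> a + 1 \<and> qext q a b (j - 1) < - s \<and> - s \<le> qext q a b j)" for s
    by (rule ext) linarith
  show ?thesis unfolding rank_def flip by simp
qed

lemma rank_zero [simp]: "rank q a b 0 = 0"
  by (simp add: rank_def)

lemma rank_pos:
  assumes mono: "strict_mono_on {..a+1} (qext q a b)" and "0 < t" "t \<le> b"
  shows "rank q a b t = 1 + card {j\<in>{1..a}. q j < t}"
proof -
  have "{i\<in>{..a}. qext q a b i < t} = insert 0 {j\<in>{1..a}. q j < t}"
    using \<open>0 < t\<close> by (auto simp: qext_def)
  then have "card {i\<in>{..a}. qext q a b i < t} = 1 + card {j\<in>{1..a}. q j < t}"
    by simp
  moreover have "rank q a b t = card {i\<in>{..a}. qext q a b i < t}"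
    using The_bracketing_index_eq_card[OF mono] assms(2,3) by (simp add: rank_def qext_def)
  ultimately show ?thesis by simp
qed

lemma rank_top:
  assumes "strict_mono_on {..a+1} (qext q a b)" "0 < t" "t \<le> b" "\<forall>j\<in>{1..a}. q j < t"
  shows "rank q a b t = a + 1"
proof -
  have "{j\<in>{1..a}. q j < t} = {1..a}" using assms(4) by auto
  then show ?thesis using rank_pos[OF assms(1-3)] by simp
qed

lemma abs_rank_le:
  assumes "strict_mono_on {..a+1} (qext q a b)" "\<bar>t\<bar> \<le> b"
  shows "\<bar>rank q a b t\<bar> \<le> a + 1"
proof -
  have bound: "\<bar>rank q a b s\<bar> \<le> a + 1" if "0 < s" "s \<le> b" for s
  proof -
    have "card {j\<in>{1..a}. q j < s} \<le> card {1..a}" by (rule card_mono) auto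
    then show ?thesis using rank_pos[OF assms(1) that] by simp
  qed
  consider "0 < t" | "t = 0" | "t < 0" by linarith
  then show ?thesis
  proof cases
    case 3
    then show ?thesis using bound[of "- t"] assms(2) rank_uminus[of q a b t] by simp
  qed (use bound assms(2) in auto)
qed

lemma rank_mono:
  assumes mono: "strict_mono_on {..a+1} (qext q a b)"
    and "\<bar>s\<bar> \<le> b" "\<bar>t\<bar> \<le> b" "s \<le> t"
  shows "rank q a b s \<le> rank q a b t"
proof -
  have pos: "1 \<le> rank q a b u" if "0 < u" "u \<le> b" for u
    using rank_pos[OF mono that] by simp
  have pos_mono: "rank q a b u \<le> rank q a b v" if "0 < u" "u \<le> v" "v \<le> b" for u v
  proof -
    have "card {j\<in>{1..a}. q j < u} \<le> card {j\<in>{1..a}. q j < v}"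
      by (rule card_mono) (use that in auto)
    then show ?thesis using rank_pos[OF mono] that by simp
  qed
  consider "0 < s" | "s \<le> 0" "0 \<le> t" | "t < 0" by linarith
  then show ?thesis
  proof cases
    case 1 then show ?thesis using pos_mono assms by simp
  next
    case 2
    then show ?thesis using pos[of t] pos[of "- s"] rank_uminus[of q a b s] assms
      by (cases "s = 0"; cases "t = 0") auto
  next
    case 3
    then show ?thesis using pos_mono[of "- t" "- s"] rank_uminus[of q a b s] rank_uminus[of q a b t] assms
      by simp
  qed
qed

lemma strict_mono_on_qext_scaled:
  assumes "1 \<le> a" "0 < \<eta> 1" "\<forall>j\<in>{1..<a}. \<eta> j < \<eta> (j + 1)" "\<eta> a < 1" "0 < c"
  shows "strict_mono_on {..a+1} (qext (\<lambda>j. \<eta> j * c) a c)"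
  by (rule strict_mono_on_qext) (use assms in auto)

lemma strict_mono_on_qext_scaled_extended:
  assumes "1 \<le> a" "0 < \<eta> 1" "\<forall>j\<in>{1..<a}. \<eta> j < \<eta> (j + 1)" "\<eta> a < 1" "0 < c" "c < b"
  shows "strict_mono_on {..a+1+1} (qext (\<lambda>j. if j \<le> a then \<eta> j * c else c) (a+1) b)"
proof (rule strict_mono_on_qext)
  show "\<forall>j\<in>{1..<a+1}. (if j \<le> a then \<eta> j * c else c) < (if j + 1 \<le> a then \<eta> (j + 1) * c else c)"
    using assms by (auto simp: less_Suc_eq not_less_eq_eq)
qed (use assms in auto)

locale scaled_extension =
  fixes q :: "nat \<Rightarrow> real" and a :: nat and b :: real
    and q' :: "nat \<Rightarrow> real" and b' :: real and c :: real
  assumes strict: "strict_mono_on {..a+1} (qext q a b)"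
    and strict': "strict_mono_on {..a+1+1} (qext q' (a+1) b')"
    and c_pos: "0 < c"
    and scaled: "\<forall>j\<in>{1..a}. q' j = c * q j"
    and extended: "q' (a+1) = c * b"
begin

lemma extended_threshold_le: "j \<in> {1..a+1} \<Longrightarrow> q' j \<le> c * b"
  using strict_mono_on_leD[OF strict', of j "a+1"] extended by (simp add: qext_def)

lemma scaled_bound_less: "c * b < b'"
  using strict_mono_onD[OF strict', of "a+1" "a+1+1"] extended by (simp add: qext_def)

lemma rank_scaled:
  assumes "\<bar>t\<bar> \<le> b"
  shows "rank q' (a+1) b' (c * t) = rank q a b t"
proof -
  have pos: "rank q' (a+1) b' (c * s) = rank q a b s" if "0 < s" "s \<le> b" for s
  proof -
    have cs: "0 < c * s" "c * s \<le> c * b" using that c_pos by auto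
    have "{j\<in>{1..a+1}. q' j < c * s} = {j\<in>{1..a}. q j < s}"
      using scaled extended cs(2) c_pos by (auto simp: le_Suc_eq)
    then show ?thesis
      using rank_pos[OF strict' cs(1)] rank_pos[OF strict that] cs(2) scaled_bound_less by simp
  qed
  consider "0 < t" | "t = 0" | "t < 0" by linarith
  then show ?thesis
  proof cases
    case 3
    then show ?thesis using pos[of "- t"] assms rank_uminus[of q a b t] rank_uminus[of q' "a+1" b' "c * t"]
      by simp
  qed (use pos assms in auto)
qed

lemma rank_sum_neg_of_jump:
  assumes "\<bar>y\<bar> \<le> b" "\<bar>z\<bar> \<le> b'" "z < - (c * b)"
  shows "rank q a b y + rank q' (a+1) b' z < 0"
proof -
  have "0 \<le> c * b" using assms(1) c_pos by simp
  then have "\<forall>j\<in>{1..a+1}. q' j < - z" and "0 < - z" "- z \<le> b'"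
    using extended_threshold_le assms(2,3) by force+
  then have "rank q' (a+1) b' (- z) = int (a + 1 + 1)"
    by (intro rank_top[OF strict'])
  then show ?thesis using abs_rank_le[OF strict assms(1)] rank_uminus[of q' "a+1" b' z] by simp
qed

lemma rank_sum_sign:
  assumes y: "\<bar>y\<bar> \<le> b" and z: "\<bar>z\<bar> \<le> b'"
    and jump: "d = 0 \<or> d = -1 \<and> z < - (c * b) \<or> d = 1 \<and> c * b < z"
  defines "\<phi> \<equiv> rank q a b y + rank q' (a+1) b' z"
  shows "(\<phi> < 0 \<longrightarrow> c * y + z + c * b * d < 0) \<and> (0 < \<phi> \<longrightarrow> 0 < c * y + z + c * b * d)
    \<and> (\<phi> = 0 \<longrightarrow> d = 0)"
proof -
  have cy: "\<bar>c * y\<bar> \<le> c * b" using y c_pos by (simp add: abs_mult)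
  then have cy': "\<bar>- (c * y)\<bar> \<le> b'" using scaled_bound_less by simp
  from jump consider "d = 0" | "d = -1" "z < - (c * b)" | "d = 1" "c * b < z" by blast
  then show ?thesis
  proof cases
    case 1
    have "\<phi> = rank q' (a+1) b' z - rank q' (a+1) b' (- (c * y))"
      unfolding \<phi>_def rank_uminus rank_scaled[OF y] by simp
    moreover have "z < - (c * y)" if "rank q' (a+1) b' z < rank q' (a+1) b' (- (c * y))"
      using rank_mono[OF strict' cy' z] that by (cases "- (c * y) \<le> z") auto
    moreover have "- (c * y) < z" if "rank q' (a+1) b' (- (c * y)) < rank q' (a+1) b' z"
      using rank_mono[OF strict' z cy'] that by (cases "z \<le> - (c * y)") auto
    ultimately show ?thesis using 1 by auto
  next
    case 2
    then show ?thesis using rank_sum_neg_of_jump[OF y z] cy unfolding \<phi>_def by auto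
  next
    case 3
    have "- \<phi> < 0"
      using rank_sum_neg_of_jump[of "- y" "- z"] y z 3 unfolding \<phi>_def rank_uminus by simp
    then show ?thesis using 3 cy by auto
  qed
qed

end

lemma vtheta_nonneg: "0 \<le> vtheta m n g h \<delta> x"
  unfolding vtheta_def viol_def by (rule sum_nonneg) auto

lemma nviol_pos_iff: "0 < nviol m n g h \<delta> x \<longleftrightarrow> vtheta m n g h \<delta> x \<noteq> 0"
proof -
  have nonneg: "\<forall>i\<in>{1..n}. 0 \<le> viol m g h \<delta> i x" unfolding viol_def by auto
  have "vtheta m n g h \<delta> x = 0 \<longleftrightarrow> (\<forall>i\<in>{1..n}. viol m g h \<delta> i x = 0)"
    unfolding vtheta_def by (rule sum_nonneg_eq_0_iff) (use nonneg in auto)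
  moreover have "0 < nviol m n g h \<delta> x \<longleftrightarrow> {i \<in> {1..n}. 0 < viol m g h \<delta> i x} \<noteq> {}"
    unfolding nviol_def by (simp add: card_gt_0_iff)
  ultimately show ?thesis using nonneg by force
qed

lemma continuous_on_vtheta:
  assumes "\<forall>i\<in>{1..m}. continuous_on S (g i)" "\<forall>i\<in>{m+1..n}. continuous_on S (h i)"
  shows "continuous_on S (vtheta m n g h \<delta>)"
proof -
  have "continuous_on S (\<lambda>x. viol m g h \<delta> i x)" if "i \<in> {1..n}" for i
    using assms that unfolding viol_def by (cases "i \<le> m") (auto intro!: continuous_intros)
  then show ?thesis
    unfolding vtheta_def[abs_def] by (intro continuous_on_sum) auto
qed

lemma abs_diff_le_SUP_minus_INF:
  fixes f :: "'a::topological_space \<Rightarrow> real"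
  assumes "compact S" "continuous_on S f" "x \<in> S" "y \<in> S"
  shows "\<bar>f x - f y\<bar> \<le> (SUP x\<in>S. f x) - (INF x\<in>S. f x)"
proof -
  have "bounded (f ` S)" using compact_continuous_image[OF assms(2,1)] by (rule compact_imp_bounded)
  then show ?thesis
    using cSUP_upper[OF _ bounded_imp_bdd_above] cINF_lower[OF bounded_imp_bdd_below] assms(3,4)
    by (smt (verit))
qed

lemma le_SUP_of_continuous_on_compact:
  fixes f :: "'a::topological_space \<Rightarrow> real"
  assumes "compact S" "continuous_on S f" "x \<in> S"
  shows "f x \<le> (SUP x\<in>S. f x)"
  using compact_continuous_image[OF assms(2,1)] assms(3)
  by (intro cSUP_upper bounded_imp_bdd_above compact_imp_bounded)

lemma pif_comparison:
  fixes f :: "'a \<Rightarrow> real" and g h :: "nat \<Rightarrow> 'a \<Rightarrow> real" and x y :: 'a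
    and m n :: nat and \<delta> :: real
  assumes "0 < D" "0 < \<xi> * V"
  defines "P \<equiv> \<xi> * V / D * (f x - f y) + (theta V m n g h \<delta> x - theta V m n g h \<delta> y)
      + \<xi> * V * (of_bool (vtheta m n g h \<delta> x \<noteq> 0) - of_bool (vtheta m n g h \<delta> y \<noteq> 0))"
  shows "pif f D V \<xi> m n g h \<delta> y < pif f D V \<xi> m n g h \<delta> x \<longleftrightarrow> P < 0"
    and "pif f D V \<xi> m n g h \<delta> x < pif f D V \<xi> m n g h \<delta> y \<longleftrightarrow> 0 < P"
    and "pif f D V \<xi> m n g h \<delta> x = pif f D V \<xi> m n g h \<delta> y \<longleftrightarrow> P = 0"
proof -
  define K where "K = D / (\<xi> * V)"
  have "pif f D V \<xi> m n g h \<delta> x - pif f D V \<xi> m n g h \<delta> y = - (K * P)"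
    using assms(1) assms(2)[THEN less_imp_neq, symmetric]
    unfolding K_def P_def pif_def sigma_def nviol_pos_iff by (simp add: field_simps)
  moreover have "0 < K" using assms by (simp add: K_def)
  then have "K * P < 0 \<longleftrightarrow> P < 0" "0 < K * P \<longleftrightarrow> 0 < P" "K * P = 0 \<longleftrightarrow> P = 0"
    by (simp_all add: mult_less_0_iff zero_less_mult_iff)
  ultimately show "pif f D V \<xi> m n g h \<delta> y < pif f D V \<xi> m n g h \<delta> x \<longleftrightarrow> P < 0"
    and "pif f D V \<xi> m n g h \<delta> x < pif f D V \<xi> m n g h \<delta> y \<longleftrightarrow> 0 < P"
    and "pif f D V \<xi> m n g h \<delta> x = pif f D V \<xi> m n g h \<delta> y \<longleftrightarrow> P = 0"
    by linarith+
qed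

lemma theta_diff_cases:
  assumes "vtheta m n g h \<delta> x1 \<le> V" "vtheta m n g h \<delta> x2 \<le> V"
  defines "d \<equiv> of_bool (vtheta m n g h \<delta> x1 \<noteq> 0) - of_bool (vtheta m n g h \<delta> x2 \<noteq> 0) :: real"
    and "z \<equiv> theta V m n g h \<delta> x1 - theta V m n g h \<delta> x2"
  shows "d = 0 \<and> \<bar>z\<bar> \<le> V \<or> d = -1 \<and> - (2 * V) \<le> z \<and> z < - V \<or> d = 1 \<and> V < z \<and> z \<le> 2 * V"
  using assms vtheta_nonneg[of m n g h \<delta> x1] vtheta_nonneg[of m n g h \<delta> x2]
  unfolding theta_def by auto

theorem lemma10:
  fixes S :: "(real^'k) set" and lo hi :: "real^'k"
    and f :: "real^'k \<Rightarrow> real" and g h :: "nat \<Rightarrow> real^'k \<Rightarrow> real"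
    and m n :: nat and \<delta> \<xi> D V :: real
    and \<alpha> :: nat and \<eta> :: "nat \<Rightarrow> real"
    and x1 x2 :: "real^'k"
  assumes S_box: "S = cbox lo hi"
    and m_le_n: "m \<le> n"
    and f_cont: "continuous_on S f"
    and g_cont: "\<forall>i\<in>{1..m}. continuous_on S (g i)"
    and h_cont: "\<forall>i\<in>{m+1..n}. continuous_on S (h i)"
    and delta_pos: "\<delta> > 0"
    and D_def: "D = (SUP x\<in>S. f x) - (INF x\<in>S. f x)"
    and V_def: "V = (SUP x\<in>S. vtheta m n g h \<delta> x)"
    and D_pos: "D > 0" and V_pos: "V > 0"
    and xi: "0 < \<xi>" "\<xi> \<le> 1"
    and alpha: "\<alpha> \<ge> 1"
    and eta_pos: "0 < \<eta> 1"
    and eta_mono: "\<forall>j\<in>{1..<\<alpha>}. \<eta> j < \<eta> (j + 1)"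
    and eta_lt1: "\<eta> \<alpha> < 1"
    and x1: "x1 \<in> S" and x2: "x2 \<in> S"
  defines "y \<equiv> f x1 - f x2"
    and "z \<equiv> theta V m n g h \<delta> x1 - theta V m n g h \<delta> x2"
    and "pv \<equiv> pif f D V \<xi> m n g h \<delta>"
  shows "let \<phi> = rank (\<lambda>j. \<eta> j * D) \<alpha> D y
               + rank (\<lambda>j. if j \<le> \<alpha> then \<eta> j * \<xi> * V else \<xi> * V) (\<alpha> + 1) (2 * V) z;
             e = \<xi> * V / D in
         (\<phi> < 0 \<longrightarrow> pv x1 > pv x2)
       \<and> (\<phi> > 0 \<longrightarrow> pv x1 < pv x2)
       \<and> (\<phi> = 0 \<and> z = - e * y \<longrightarrow> pv x1 = pv x2)
       \<and> (\<phi> = 0 \<and> z < - e * y \<longrightarrow> pv x1 > pv x2)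
       \<and> (\<phi> = 0 \<and> z > - e * y \<longrightarrow> pv x1 < pv x2)"
proof -
  define e where "e = \<xi> * V / D"
  define d where "d = of_bool (vtheta m n g h \<delta> x1 \<noteq> 0) - (of_bool (vtheta m n g h \<delta> x2 \<noteq> 0) :: real)"
  have "compact S" using S_box by simp
  have y: "\<bar>y\<bar> \<le> D"
    unfolding y_def D_def using abs_diff_le_SUP_minus_INF[OF \<open>compact S\<close> f_cont x1 x2] .
  have vtheta_le: "vtheta m n g h \<delta> x \<le> V" if "x \<in> S" for x
    unfolding V_def by (rule le_SUP_of_continuous_on_compact[OF \<open>compact S\<close> continuous_on_vtheta[OF g_cont h_cont] that])
  have \<xi>V: "0 < \<xi> * V" "\<xi> * V \<le> V" and eD: "e * D = \<xi> * V"
    using xi V_pos D_pos by (auto simp: e_def)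
  have qz: "(\<lambda>j. if j \<le> \<alpha> then \<eta> j * \<xi> * V else \<xi> * V) = (\<lambda>j. if j \<le> \<alpha> then \<eta> j * (\<xi> * V) else \<xi> * V)"
    by (simp add: fun_eq_iff mult.assoc)
  interpret scaled_extension "\<lambda>j. \<eta> j * D" \<alpha> D "\<lambda>j. if j \<le> \<alpha> then \<eta> j * (\<xi> * V) else \<xi> * V" "2 * V" e
    using strict_mono_on_qext_scaled[OF alpha eta_pos eta_mono eta_lt1 D_pos] \<xi>V D_pos V_pos
      strict_mono_on_qext_scaled_extended[OF alpha eta_pos eta_mono eta_lt1 \<xi>V(1), of "2 * V"]
    by unfold_locales (auto simp: e_def)
  have "\<bar>z\<bar> \<le> 2 * V" "d = 0 \<or> d = -1 \<and> z < - (e * D) \<or> d = 1 \<and> e * D < z"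
    using theta_diff_cases[OF vtheta_le[OF x1] vtheta_le[OF x2]] \<xi>V unfolding eD d_def z_def by (smt (verit))+
  note sign = rank_sum_sign[OF y this]
  have "pv x2 < pv x1 \<longleftrightarrow> e * y + z + e * D * d < 0" "pv x1 < pv x2 \<longleftrightarrow> 0 < e * y + z + e * D * d"
    "pv x1 = pv x2 \<longleftrightarrow> e * y + z + e * D * d = 0"
    using pif_comparison[OF D_pos \<xi>V(1), where f = f and g = g and h = h and x = x1 and y = x2]
    unfolding pv_def eD by (simp_all add: e_def y_def z_def d_def)
  moreover have "d = 0 \<Longrightarrow> e * D * d = 0" "- e * y = - (e * y)" by simp_all
  ultimately show ?thesis
    using sign unfolding Let_def qz e_def[symmetric] by (smt (verit))
qed

end
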